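(* Let $(X,\mathbf R)$ be a symmetric association scheme with $D$ classes which is metric with respect to the ordering $A_0,A_1,\dots,A_D$. Fix $x\in X$ and write $E_i^*=E_i^*(x)$. Let $\chi\in V$ be a code, and set $\delta_x=\delta_x(\chi)$ and $s^*=s^*(\chi)$. Then for every $0\le \ell\le D$, the vector $A_\ell\chi$ is a relative $(\delta_x-s^* )$-codesign with respect to $x$; that is, $E_i^*A_\ell\chi\in\mathbb C A_i\hat x$ for all $1\le i\le \delta_x-s^*$.
   Context: $(X,\mathbf R)$, $\mathbf R=\{R_0,\dots,R_D\}$, is a symmetric association scheme with associate matrices $A_0=I,A_1,\dots,A_D$ (the $0/1$ adjacency matrices of the relations $R_i$), Bose–Mesner algebra $M=\mathrm{span}\{A_0,\dots,A_D\}$, and primitive idempotents $E_0=|X|^{-1}J,E_1,\dots,E_D$ of $M$. Metric with respect to $A_0,\dots,A_D$ means $(X,R_1)$ is a distance-regular graph and $R_i$ is the distance-$i$ relation of this graph. $V=\mathbb C^X$ with standard basis $\{\hat y:y\in X\}$ and Hermitian inner product $\langle\hat y,\hat z\rangle=\delta_{yz}$. For $x\in X$, the dual idempotent $E_i^*(x)$ is the diagonal matrix with $(E_i^*(x))_{yy}=(A_i)_{xy}$. A vector $\chi\in V$ is a code if $\chi\notin E_0V$ and $\chi\notin E_0^*(z)V$ for every $z\in X$. $\delta_x(\chi)=\min\{i\ne0:E_i^*(x)\chi\ne0\}$ and $s^*(\chi)=|\{j\ne 0: E_j\chi\ne 0\}|$. A vector $\psi\in V$ is a relative $t$-codesign with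 respect to $x$ if $E_i^*(x)\psi$ and $A_i\hat x$ are linearly dependent for all $1\le i\le t$ (vacuous if $t\le 0$). *)

theory Defs
  imports "HOL-Analysis.Analysis"
begin

text \<open>The point set X is the finite type 'a. Relations R_0,...,R_D are given by
  R :: nat => 'a => 'a => bool (only indices 0..D matter). Vectors in V = C^X are
  complex^'a, matrices are complex^'a^'a.\<close>

definition adj :: "(nat \<Rightarrow> 'a::finite \<Rightarrow> 'a \<Rightarrow> bool) \<Rightarrow> nat \<Rightarrow> complex^'a^'a" where
  "adj R i = (\<chi> y z. if R i y z then 1 else 0)"

definition sym_assoc_scheme :: "nat \<Rightarrow> (nat \<Rightarrow> 'a::finite \<Rightarrow> 'a \<Rightarrow> bool) \<Rightarrow> bool" where
  "sym_assoc_scheme D R \<longleftrightarrow>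
     (\<forall>y z. R 0 y z \<longleftrightarrow> y = z) \<and>
     (\<forall>y z. \<exists>!i. i \<le> D \<and> R i y z) \<and>
     (\<forall>i\<le>D. \<exists>y z. R i y z) \<and>
     (\<forall>i\<le>D. \<forall>y z. R i y z \<longrightarrow> R i z y) \<and>
     (\<forall>i\<le>D. \<forall>j\<le>D. \<forall>k\<le>D. \<exists>p::nat. \<forall>y z. R k y z \<longrightarrow> card {w. R i y w \<and> R j w z} = p)"

definition metric_scheme :: "nat \<Rightarrow> (nat \<Rightarrow> 'a::finite \<Rightarrow> 'a \<Rightarrow> bool) \<Rightarrow> bool" where
  "metric_scheme D R \<longleftrightarrow>
     (\<forall>i\<le>D. \<forall>y z. R i y z \<longleftrightarrow>
        ((y, z) \<in> {(u, v). R 1 u v} ^^ i \<and> (\<forall>j<i. (y, z) \<notin> {(u, v). R 1 u v} ^^ j)))"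

text \<open>E_0,...,E_D are the primitive idempotents of the Bose-Mesner algebra
  M = span{A_0,...,A_D}, with E_0 = |X|^{-1} J.\<close>
definition primitive_idempotents ::
  "nat \<Rightarrow> (nat \<Rightarrow> 'a::finite \<Rightarrow> 'a \<Rightarrow> bool) \<Rightarrow> (nat \<Rightarrow> complex^'a^'a) \<Rightarrow> bool" where
  "primitive_idempotents D R E \<longleftrightarrow>
     (\<forall>j\<le>D. \<exists>c::nat \<Rightarrow> complex. E j = (\<chi> y z. \<Sum>i\<le>D. c i * adj R i $ y $ z)) \<and>
     (\<forall>i\<le>D. \<forall>j\<le>D. E i ** E j = (if i = j then E i else 0)) \<and>
     (\<forall>j\<le>D. E j \<noteq> 0) \<and>
     (\<Sum>j\<le>D. E j) = mat 1 \<and>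
     E 0 = (\<chi> y z. 1 / of_nat CARD('a))"

definition dual_idem :: "(nat \<Rightarrow> 'a::finite \<Rightarrow> 'a \<Rightarrow> bool) \<Rightarrow> 'a \<Rightarrow> nat \<Rightarrow> complex^'a^'a" where
  "dual_idem R x i = (\<chi> y z. if y = z then adj R i $ x $ y else 0)"

definition hat :: "'a::finite \<Rightarrow> complex^'a" where
  "hat x = axis x 1"

definition is_code ::
  "(nat \<Rightarrow> 'a::finite \<Rightarrow> 'a \<Rightarrow> bool) \<Rightarrow> (nat \<Rightarrow> complex^'a^'a) \<Rightarrow> complex^'a \<Rightarrow> bool" where
  "is_code R E cw \<longleftrightarrow> cw \<notin> range (\<lambda>v. E 0 *v v) \<and>
     (\<forall>z. cw \<notin> range (\<lambda>v. dual_idem R z 0 *v v))"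

definition delta_x :: "nat \<Rightarrow> (nat \<Rightarrow> 'a::finite \<Rightarrow> 'a \<Rightarrow> bool) \<Rightarrow> 'a \<Rightarrow> complex^'a \<Rightarrow> nat" where
  "delta_x D R x cw = (LEAST i. i \<noteq> 0 \<and> i \<le> D \<and> dual_idem R x i *v cw \<noteq> 0)"

definition s_star :: "nat \<Rightarrow> (nat \<Rightarrow> complex^'a::finite^'a) \<Rightarrow> complex^'a \<Rightarrow> nat" where
  "s_star D E cw = card {j. j \<noteq> 0 \<and> j \<le> D \<and> E j *v cw \<noteq> 0}"

definition lin_dep2 :: "complex^'a::finite \<Rightarrow> complex^'a \<Rightarrow> bool" where
  "lin_dep2 u v \<longleftrightarrow> (\<exists>a b::complex. (a \<noteq> 0 \<or> b \<noteq> 0) \<and> a *s u + b *s v = 0)"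

text \<open>Relative t-codesign with respect to x (t an integer; vacuous if t <= 0).\<close>
definition rel_codesign ::
  "nat \<Rightarrow> (nat \<Rightarrow> 'a::finite \<Rightarrow> 'a \<Rightarrow> bool) \<Rightarrow> 'a \<Rightarrow> int \<Rightarrow> complex^'a \<Rightarrow> bool" where
  "rel_codesign D R x t \<psi> \<longleftrightarrow>
     (\<forall>i. 1 \<le> i \<and> int i \<le> t \<and> i \<le> D \<longrightarrow>
        lin_dep2 (dual_idem R x i *v \<psi>) (adj R i *v hat x))"

end

theory Submission
  imports Defs
begin

text \<open>Every \<open>A\<^sub>k\<close> lies in the Bose-Mesner algebra, which is spanned by the primitive
  idempotents, so every \<open>A\<^sub>k \<chi>\<close> lies in the span of \<open>1\<close> and the nonzero \<open>E\<^sub>j \<chi>\<close> with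
  \<open>j \<noteq> 0\<close>, a space of dimension at most \<open>s\<^sup>* + 1\<close>. The spans of \<open>1, A\<^sub>0 \<chi>, \<dots>, A\<^bsub>m - 1\<^esub> \<chi>\<close>
  increase with \<open>m\<close>, and by the three-term recurrence for \<open>A\<^sub>1 A\<^sub>m\<close> they stay constant forever
  once they stop growing; hence each \<open>A\<^sub>l \<chi>\<close> is a combination of \<open>1, A\<^sub>0 \<chi>, \<dots>, A\<^bsub>s\<^sup>* - 1\<^esub> \<chi>\<close>.
  Now let \<open>i \<le> \<delta>\<^sub>x - s\<^sup>*\<close> and \<open>k < s\<^sup>*\<close>. A vertex at distance \<open>k\<close> from a vertex at distance
  \<open>i\<close> from \<open>x\<close> is at distance less than \<open>\<delta>\<^sub>x\<close> from \<open>x\<close>, so \<open>\<chi>\<close> vanishes there unless it is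
  \<open>x\<close> itself; thus \<open>E\<^sup>*\<^sub>i A\<^sub>k \<chi>\<close> is a multiple of \<open>A\<^sub>i (hat x)\<close>, and so is \<open>E\<^sup>*\<^sub>i 1 = A\<^sub>i (hat x)\<close>.\<close>

text \<open>The library scales matrices by reals only; the Bose-Mesner algebra needs complex
  coefficients.\<close>

definition mat_scale :: "'a::field \<Rightarrow> 'a^'n^'m \<Rightarrow> 'a^'n^'m" where
  "mat_scale c A = (\<chi> i j. c * A$i$j)"

interpretation mat: vector_space "mat_scale :: 'a::field \<Rightarrow> 'a^'n^'m \<Rightarrow> _"
  by unfold_locales (simp_all add: mat_scale_def vec_eq_iff algebra_simps)

lemma mat_scale_matrix_vector_mult: "mat_scale c A *v v = c *s (A *v v)"
  by (simp add: mat_scale_def vec_eq_iff matrix_vector_mult_def sum_distrib_left mult.assoc)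

lemma mat_scale_matrix_mult: "mat_scale c A ** B = mat_scale c (A ** B)"
  by (simp add: mat_scale_def vec_eq_iff matrix_matrix_mult_def sum_distrib_left mult.assoc)

lemma module_hom_matrix_vector_mult_left: "module_hom mat_scale (*s) (\<lambda>A. A *v v)"
  unfolding module_hom_iff
  by (simp add: mat.module_axioms vec.module_axioms matrix_vector_mult_add_rdistrib
      mat_scale_matrix_vector_mult)

lemma matrix_mult_sum_left: "(\<Sum>i\<in>I. f i) ** B = (\<Sum>i\<in>I. f i ** B)"
  by (induction I rule: infinite_finite_induct)
     (simp_all add: vec_eq_iff matrix_matrix_mult_def sum.distrib distrib_right)

lemma matrix_vector_mult_sum_left: "(\<Sum>i\<in>I. f i) *v v = (\<Sum>i\<in>I. f i *v v)"
  by (induction I rule: infinite_finite_induct) (simp_all add: matrix_vector_mult_add_rdistrib)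

lemma (in finite_dimensional_vector_space) span_chain_stabilizes:
  assumes mono: "\<And>m. span (G m) \<subseteq> span (G (Suc m))"
    and persistent: "\<And>m. span (G (Suc m)) = span (G m) \<Longrightarrow> span (G (Suc (Suc m))) = span (G (Suc m))"
    and bounded: "\<And>m. dim (G m) \<le> dim (G 0) + d"
  shows "span (G m) \<subseteq> span (G d)"
proof -
  have mono_le: "span (G m) \<subseteq> span (G m')" if "m \<le> m'" for m m'
    using lift_Suc_mono_le[of "\<lambda>m. span (G m)"] mono that by blast
  have "\<exists>m\<le>d. span (G (Suc m)) = span (G m)"
  proof (rule ccontr)
    assume "\<not> ?thesis"
    then have strict: "span (G m) \<subset> span (G (Suc m))" if "m \<le> d" for m
      using mono that by blast
    have "dim (G 0) + m \<le> dim (G m)" if "m \<le> Suc d" for m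
      using that by (induction m) (auto dest!: strict dim_psubset)
    from this[of "Suc d"] bounded[of "Suc d"] show False by simp
  qed
  then obtain m0 where "m0 \<le> d" and stable: "span (G (Suc m0)) = span (G m0)" by blast
  have "span (G (Suc (m0 + n))) = span (G (m0 + n))" for n
    by (induction n) (simp_all add: stable persistent)
  then have stable_from: "span (G (m0 + n)) = span (G m0)" for n
    by (induction n) simp_all
  show ?thesis
  proof (cases "m \<le> d")
    case True
    then show ?thesis by (rule mono_le)
  next
    case False
    then have "span (G m) = span (G m0)"
      using stable_from[of "m - m0"] \<open>m0 \<le> d\<close> by simp
    then show ?thesis using mono_le[OF \<open>m0 \<le> d\<close>] by simp
  qed
qed

lemma orthogonal_idempotents_independent:
  fixes E :: "nat \<Rightarrow> 'a::field^'n^'n"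
  assumes orth: "\<And>i j. i \<in> I \<Longrightarrow> j \<in> I \<Longrightarrow> E i ** E j = (if i = j then E i else 0)"
    and nonzero: "\<And>j. j \<in> I \<Longrightarrow> E j \<noteq> 0"
  shows "inj_on E I" and "mat.independent (E ` I)"
proof -
  show inj: "inj_on E I"
  proof (rule inj_onI, rule ccontr)
    fix i j assume ij: "i \<in> I" "j \<in> I" "E i = E j" "i \<noteq> j"
    then have "E i = E i ** E j" using orth[of i i] by simp
    then show False using orth[of i j] nonzero ij by simp
  qed
  show "mat.independent (E ` I)"
    unfolding mat.independent_explicit_finite_subsets
  proof (intro allI impI ballI)
    fix T u B assume T: "T \<subseteq> E ` I" "finite T" and combination: "(\<Sum>C\<in>T. mat_scale (u C) C) = 0"
      and "B \<in> T"
    then obtain j where j: "j \<in> I" "B = E j" by blast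
    have "0 = (\<Sum>C\<in>T. mat_scale (u C) C) ** E j" using combination by simp
    also have "\<dots> = (\<Sum>C\<in>T. if C = B then mat_scale (u B) B else 0)"
      unfolding matrix_mult_sum_left mat_scale_matrix_mult
    proof (rule sum.cong)
      fix C assume "C \<in> T"
      then obtain i where "i \<in> I" "C = E i" using T by blast
      then show "mat_scale (u C) (C ** E j) = (if C = B then mat_scale (u B) B else 0)"
        using orth[of i j] j inj_onD[OF inj, of i j] by auto
    qed simp
    also have "\<dots> = mat_scale (u B) B" using T(2) \<open>B \<in> T\<close> by simp
    finally show "u B = 0" using nonzero j by (simp add: mat.scale_eq_0_iff)
  qed
qed

lemma adj_in_span_idempotents:
  assumes E: "primitive_idempotents D R E" and "k \<le> D"
  shows "adj R k \<in> mat.span (E ` {..D})"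
proof (rule ccontr)
  assume outside: "adj R k \<notin> mat.span (E ` {..D})"
  have inj: "inj_on E {..D}" and independent: "mat.independent (E ` {..D})"
    using orthogonal_idempotents_independent[of "{..D}" E] E
    unfolding primitive_idempotents_def by auto
  have "E ` {..D} \<subseteq> mat.span (adj R ` {..D})"
  proof
    fix B assume "B \<in> E ` {..D}"
    then obtain j c where "j \<le> D" "B = (\<chi> y z. \<Sum>i\<le>D. c i * adj R i $ y $ z)"
      using E unfolding primitive_idempotents_def by blast
    then have "B = (\<Sum>i\<le>D. mat_scale (c i) (adj R i))"
      by (simp add: vec_eq_iff mat_scale_def)
    moreover have "(\<Sum>i\<le>D. mat_scale (c i) (adj R i)) \<in> mat.span (adj R ` {..D})"
      by (intro mat.span_sum mat.span_scale mat.span_base) auto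
    ultimately show "B \<in> mat.span (adj R ` {..D})" by simp
  qed
  moreover have "adj R k \<in> mat.span (adj R ` {..D})"
    using \<open>k \<le> D\<close> by (simp add: mat.span_base)
  ultimately have "card (insert (adj R k) (E ` {..D})) \<le> card (adj R ` {..D})"
    using mat.independent_span_bound[of "adj R ` {..D}"] mat.independent_insertI[OF outside independent]
    by simp
  also have "\<dots> \<le> Suc D"
    using card_image_le[of "{..D}" "adj R"] by simp
  finally have "card (insert (adj R k) (E ` {..D})) \<le> Suc D" .
  moreover have "adj R k \<notin> E ` {..D}"
    using outside mat.span_base[of "adj R k" "E ` {..D}"] by argo
  ultimately show False
    using card_image[OF inj] by (simp add: card_insert_if)
qed

lemma adj_mult_in_span_idempotent_images:
  assumes E: "primitive_idempotents D R E" and "k \<le> D"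
  shows "adj R k *v v \<in> vec.span (insert 1 ((\<lambda>j. E j *v v) ` {j. j \<noteq> 0 \<and> j \<le> D \<and> E j *v v \<noteq> 0}))"
    (is "_ \<in> vec.span ?H")
proof -
  have "E 0 *v v = (\<Sum>z\<in>UNIV. v $ z / of_nat CARD('a)) *s 1"
    using E by (simp add: primitive_idempotents_def vec_eq_iff matrix_vector_mult_def)
  then have "E j *v v \<in> vec.span ?H" if "j \<le> D" for j
    using that by (cases "j = 0 \<or> E j *v v = 0") (auto simp: vec.span_base vec.span_scale vec.span_zero)
  then have "vec.span ((\<lambda>j. E j *v v) ` {..D}) \<subseteq> vec.span ?H"
    by (intro vec.span_minimal vec.subspace_span) auto
  moreover have "adj R k *v v \<in> (\<lambda>A. A *v v) ` mat.span (E ` {..D})"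
    using adj_in_span_idempotents[OF assms] by (rule imageI)
  then have "adj R k *v v \<in> vec.span ((\<lambda>j. E j *v v) ` {..D})"
    unfolding module_hom.span_image[OF module_hom_matrix_vector_mult_left, symmetric] image_image .
  ultimately show ?thesis by blast
qed

lemma adj_mult_adj_component:
  "(adj R i ** adj R j) $ y $ z = of_nat (card {w. R i y w \<and> R j w z})"
proof -
  have "(adj R i ** adj R j) $ y $ z = (\<Sum>w\<in>UNIV. if R i y w \<and> R j w z then 1 else 0)"
    unfolding matrix_matrix_mult_def adj_def by (auto intro: sum.cong)
  then show ?thesis by (simp add: sum.If_cases)
qed

lemma adj_mult_vector_component: "(adj R k *v v) $ y = (\<Sum>z | R k y z. v $ z)"
proof -
  have "(adj R k *v v) $ y = (\<Sum>z\<in>UNIV. if R k y z then v $ z else 0)"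
    unfolding matrix_vector_mult_def adj_def by (auto intro: sum.cong)
  then show ?thesis by (simp add: sum.If_cases)
qed

lemma adj_mult_hat: "adj R i *v hat x = (\<chi> y. if R i y x then 1 else 0)"
proof -
  have "(adj R i *v hat x) $ y = (\<Sum>z\<in>UNIV. if z = x then (if R i y x then 1 else 0) else 0)" for y
    unfolding matrix_vector_mult_def hat_def vec_lambda_beta
    by (rule sum.cong) (auto simp: adj_def axis_def)
  then show ?thesis by (simp add: vec_eq_iff)
qed

lemma dual_idem_mult_component: "(dual_idem R x i *v v) $ y = (if R i x y then v $ y else 0)"
proof -
  have "(dual_idem R x i *v v) $ y = (\<Sum>z\<in>UNIV. if z = y then (if R i x y then v $ y else 0) else 0)"
    unfolding matrix_vector_mult_def dual_idem_def vec_lambda_beta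
    by (rule sum.cong) (auto simp: adj_def)
  then show ?thesis by simp
qed

lemma vanishes_below_delta_x:
  assumes "0 < j" "j \<le> D" "j < delta_x D R x v" "R j x z"
  shows "v $ z = 0"
proof -
  have "dual_idem R x j *v v = 0"
    using not_less_Least[OF assms(3)[unfolded delta_x_def]] assms(1,2) by auto
  then show ?thesis
    using dual_idem_mult_component[of R x j v z] assms(4) by simp
qed

lemma matrix_vector_mult_in_span:
  assumes "(\<lambda>u. A *v u) ` S \<subseteq> vec.span T" and "u \<in> vec.span S"
  shows "A *v u \<in> vec.span T"
proof -
  have "A *v u \<in> (\<lambda>u. A *v u) ` vec.span S" using assms(2) by (rule imageI)
  also have "\<dots> = vec.span ((\<lambda>u. A *v u) ` S)" by (rule vec.span_image[symmetric])
  also have "\<dots> \<subseteq> vec.span T" using assms(1) by (intro vec.span_minimal vec.subspace_span)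
  finally show ?thesis .
qed

locale sym_scheme =
  fixes D :: nat and R :: "nat \<Rightarrow> 'a::finite \<Rightarrow> 'a \<Rightarrow> bool"
  assumes sym_assoc_scheme: "sym_assoc_scheme D R"
begin

lemma diagonal: "R 0 y z \<longleftrightarrow> y = z"
  using sym_assoc_scheme by (simp add: sym_assoc_scheme_def)

lemma relation_ex1: "\<exists>!i. i \<le> D \<and> R i y z"
  using sym_assoc_scheme by (simp add: sym_assoc_scheme_def)

lemma relation_exists:
  obtains i where "i \<le> D" "R i y z"
  using relation_ex1 by blast

lemma relation_unique: "R i y z \<Longrightarrow> R j y z \<Longrightarrow> i \<le> D \<Longrightarrow> j \<le> D \<Longrightarrow> i = j"
  using relation_ex1 by blast

lemma relation_nonempty: "i \<le> D \<Longrightarrow> \<exists>y z. R i y z"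
  using sym_assoc_scheme by (simp add: sym_assoc_scheme_def)

lemma relation_sym: "i \<le> D \<Longrightarrow> R i y z \<Longrightarrow> R i z y"
  using sym_assoc_scheme unfolding sym_assoc_scheme_def by (elim conjE allE impE)

lemma intersection_numbers:
  assumes "i \<le> D" "j \<le> D"
  obtains p where "\<And>k y z. k \<le> D \<Longrightarrow> R k y z \<Longrightarrow> card {w. R i y w \<and> R j w z} = p k"
proof -
  have "\<forall>k\<le>D. \<exists>p. \<forall>y z. R k y z \<longrightarrow> card {w. R i y w \<and> R j w z} = p"
    using sym_assoc_scheme assms by (simp add: sym_assoc_scheme_def)
  then show thesis using that by metis
qed

lemma matrix_eq_sum_adj:
  assumes "\<And>k y z. k \<le> D \<Longrightarrow> R k y z \<Longrightarrow> B $ y $ z = c k"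
  shows "B = (\<Sum>k\<le>D. mat_scale (c k) (adj R k))"
proof (subst vec_eq_iff, intro allI, subst vec_eq_iff, intro allI)
  fix y z
  obtain d where d: "d \<le> D" "R d y z" by (rule relation_exists)
  have "(\<Sum>k\<le>D. mat_scale (c k) (adj R k)) $ y $ z = (\<Sum>k\<le>D. if k = d then c d else 0)"
    unfolding sum_component
    by (rule sum.cong) (auto simp: mat_scale_def adj_def d dest: relation_unique[OF _ d(2) _ d(1)])
  then show "B $ y $ z = (\<Sum>k\<le>D. mat_scale (c k) (adj R k)) $ y $ z"
    using assms d by simp
qed

lemma adj_mult_ones:
  assumes "i \<le> D"
  obtains n :: nat where "adj R i *v 1 = of_nat n *s 1"
proof -
  obtain p where p: "\<And>k y z. k \<le> D \<Longrightarrow> R k y z \<Longrightarrow> card {w. R i y w \<and> R i w z} = p k"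
    using intersection_numbers[OF assms assms] by blast
  have "{w. R i y w \<and> R i w y} = {w. R i y w}" for y
    using relation_sym[OF assms] by auto
  then have "card {w. R i y w} = p 0" for y
    using p[of 0 y y] by (simp add: diagonal)
  then have "adj R i *v 1 = of_nat (p 0) *s 1"
    unfolding vec_eq_iff adj_mult_vector_component by simp
  then show thesis by (rule that)
qed

lemma dual_idem_mult_ones: "i \<le> D \<Longrightarrow> dual_idem R x i *v 1 = adj R i *v hat x"
  by (auto simp: vec_eq_iff dual_idem_mult_component adj_mult_hat dest: relation_sym)

definition adj_chain :: "complex^'a \<Rightarrow> nat \<Rightarrow> (complex^'a) set" where
  "adj_chain v m = insert 1 ((\<lambda>k. adj R k *v v) ` {k. k < m \<and> k \<le> D})"

lemma adj_chain_Suc: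
  "adj_chain v (Suc m) = (if m \<le> D then insert (adj R m *v v) (adj_chain v m) else adj_chain v m)"
  by (auto simp: adj_chain_def less_Suc_eq)

lemma dim_adj_chain_le:
  assumes "primitive_idempotents D R E"
  shows "vec.dim (adj_chain v m) \<le> Suc (s_star D E v)"
proof -
  define J where "J = {j. j \<noteq> 0 \<and> j \<le> D \<and> E j *v v \<noteq> 0}"
  define H where "H = insert 1 ((\<lambda>j. E j *v v) ` J)"
  have "finite J" unfolding J_def by (rule finite_subset[of _ "{..D}"]) auto
  then have "finite H" and "card H \<le> Suc (s_star D E v)"
    using card_image_le[of J "\<lambda>j. E j *v v"]
    by (auto simp: H_def J_def s_star_def card_insert_if)
  moreover have "adj_chain v m \<subseteq> vec.span H"
    using adj_mult_in_span_idempotent_images[OF assms]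
    by (auto simp: adj_chain_def H_def J_def vec.span_base)
  ultimately show ?thesis
    using vec.dim_le_card by (meson le_trans)
qed

end

locale metric_sym_scheme = sym_scheme +
  assumes metric_scheme: "metric_scheme D R"
begin

abbreviation graph_rel :: "('a \<times> 'a) set" where
  "graph_rel \<equiv> {(u, v). R 1 u v}"

lemma relation_iff_distance:
  "i \<le> D \<Longrightarrow> R i y z \<longleftrightarrow> (y, z) \<in> graph_rel ^^ i \<and> (\<forall>j<i. (y, z) \<notin> graph_rel ^^ j)"
  using metric_scheme unfolding metric_scheme_def by blast

lemma triangle_inequality:
  assumes "R i y w" "R j w z" "R k y z" "i \<le> D" "j \<le> D" "k \<le> D"
  shows "k \<le> i + j"
proof -
  have "(y, w) \<in> graph_rel ^^ i" "(w, z) \<in> graph_rel ^^ j"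
    using assms relation_iff_distance by blast+
  then have "(y, z) \<in> graph_rel ^^ (i + j)"
    unfolding relpow_add by (rule relcompI)
  then show ?thesis
    using assms(3,6) relation_iff_distance not_le by blast
qed

lemma path_first_step:
  assumes "m < D" "R (Suc m) y z"
  obtains w where "R 1 y w" "R m w z"
proof -
  have "(y, z) \<in> graph_rel ^^ (1 + m)"
    using relation_iff_distance[of "Suc m"] assms by simp
  then obtain w where "R 1 y w" and w: "(w, z) \<in> graph_rel ^^ m"
    unfolding relpow_add by auto
  obtain j where j: "j \<le> D" "R j w z" by (rule relation_exists)
  have "j \<le> m"
    using relation_iff_distance[OF j(1)] j(2) w not_le by blast
  moreover have "Suc m \<le> 1 + j"
    using triangle_inequality[OF \<open>R 1 y w\<close> j(2) assms(2)] assms(1) j(1) by simp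
  ultimately have "j = m" by simp
  then show thesis using that \<open>R 1 y w\<close> j(2) by blast
qed

lemma adj_1_mult_adj:
  assumes "0 < D" "m \<le> D"
  obtains p where "adj R 1 ** adj R m = (\<Sum>k\<le>D. mat_scale (p k) (adj R k))"
    and "\<And>k. Suc m < k \<Longrightarrow> p k = 0" and "m < D \<Longrightarrow> p (Suc m) \<noteq> 0"
proof -
  obtain n where n: "\<And>k y z. k \<le> D \<Longrightarrow> R k y z \<Longrightarrow> card {w. R 1 y w \<and> R m w z} = n k"
    using intersection_numbers[of 1 m] assms by auto
  define p where "p k = (if k \<le> Suc m then of_nat (n k) else 0 :: complex)" for k
  have "(adj R 1 ** adj R m) $ y $ z = p k" if "k \<le> D" "R k y z" for k y z
  proof (cases "k \<le> Suc m")
    case False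
    then have "{w. R 1 y w \<and> R m w z} = {}"
      using triangle_inequality[OF _ _ \<open>R k y z\<close> _ \<open>m \<le> D\<close> \<open>k \<le> D\<close>] assms(1) by fastforce
    then show ?thesis
      using False by (simp add: adj_mult_adj_component p_def)
  qed (use that n in \<open>simp add: adj_mult_adj_component p_def\<close>)
  then have "adj R 1 ** adj R m = (\<Sum>k\<le>D. mat_scale (p k) (adj R k))"
    by (rule matrix_eq_sum_adj)
  moreover have "p (Suc m) \<noteq> 0" if below: "m < D"
  proof -
    obtain y z where yz: "R (Suc m) y z"
      using relation_nonempty[of "Suc m"] below by auto
    obtain w where "R 1 y w" "R m w z" by (rule path_first_step[OF below yz])
    then have "card {w. R 1 y w \<and> R m w z} \<noteq> 0" by auto
    moreover have "card {w. R 1 y w \<and> R m w z} = n (Suc m)"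
      using n[of "Suc m" y z] below yz by simp
    ultimately have "n (Suc m) \<noteq> 0" by argo
    then show ?thesis by (simp add: p_def)
  qed
  ultimately show thesis using that by (simp add: p_def)
qed

lemma adj_1_mult_adj_mult_in_span:
  assumes "0 < D" and k: "k < m" "k \<le> D"
  shows "adj R 1 *v (adj R k *v v) \<in> vec.span (adj_chain v (Suc m))"
proof -
  obtain p where p: "adj R 1 ** adj R k = (\<Sum>j\<le>D. mat_scale (p j) (adj R j))"
    and zero: "\<And>j. Suc k < j \<Longrightarrow> p j = 0"
    using adj_1_mult_adj[OF assms(1) k(2)] by blast
  have "adj R 1 *v (adj R k *v v) = (\<Sum>j\<le>D. p j *s (adj R j *v v))"
    unfolding matrix_vector_mul_assoc p matrix_vector_mult_sum_left mat_scale_matrix_vector_mult ..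
  also have "\<dots> \<in> vec.span (adj_chain v (Suc m))"
  proof (rule vec.span_sum)
    fix j assume "j \<in> {..D}"
    then show "p j *s (adj R j *v v) \<in> vec.span (adj_chain v (Suc m))"
      using zero[of j] k(1)
      by (cases "Suc k < j") (auto simp: adj_chain_def vec.span_zero vec.span_base vec.span_scale)
  qed
  finally show ?thesis .
qed

lemma adj_1_mult_in_span_adj_chain:
  assumes "0 < D" "u \<in> vec.span (adj_chain v m)"
  shows "adj R 1 *v u \<in> vec.span (adj_chain v (Suc m))"
proof (rule matrix_vector_mult_in_span[OF _ assms(2)], rule image_subsetI)
  fix g assume "g \<in> adj_chain v m"
  then consider "g = 1" | k where "k < m" "k \<le> D" "g = adj R k *v v"
    by (auto simp: adj_chain_def)
  then show "adj R 1 *v g \<in> vec.span (adj_chain v (Suc m))"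
  proof cases
    case 1
    obtain n where "adj R 1 *v 1 = of_nat n *s 1"
      using adj_mult_ones[of 1] assms(1) by auto
    then show ?thesis
      using 1 by (simp add: adj_chain_def vec.span_base vec.span_scale)
  next
    case 2
    then show ?thesis using adj_1_mult_adj_mult_in_span[OF assms(1)] by simp
  qed
qed

lemma span_adj_chain_persistent:
  assumes "0 < D" and stable: "vec.span (adj_chain v (Suc m)) = vec.span (adj_chain v m)"
  shows "vec.span (adj_chain v (Suc (Suc m))) = vec.span (adj_chain v (Suc m))"
proof (cases "m < D")
  case False
  then show ?thesis by (simp add: adj_chain_Suc[of v "Suc m"])
next
  case True
  obtain p where p: "adj R 1 ** adj R m = (\<Sum>j\<le>D. mat_scale (p j) (adj R j))"
    and zero: "\<And>j. Suc m < j \<Longrightarrow> p j = 0" and top: "p (Suc m) \<noteq> 0"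
    using adj_1_mult_adj[OF assms(1), of m] True by auto
  let ?G = "adj_chain v (Suc m)" and ?rest = "\<Sum>j\<in>{..D} - {Suc m}. p j *s (adj R j *v v)"
  have "adj R 1 *v (adj R m *v v) = (\<Sum>j\<le>D. p j *s (adj R j *v v))"
    unfolding matrix_vector_mul_assoc p matrix_vector_mult_sum_left mat_scale_matrix_vector_mult ..
  also have "\<dots> = p (Suc m) *s (adj R (Suc m) *v v) + ?rest"
    using True by (simp add: sum.remove[of "{..D}" "Suc m"])
  finally have decomposition: "adj R 1 *v (adj R m *v v) = p (Suc m) *s (adj R (Suc m) *v v) + ?rest" .
  have "adj R m *v v \<in> ?G"
    using True by (simp add: adj_chain_def)
  then have "adj R m *v v \<in> vec.span (adj_chain v m)"
    using stable vec.span_base by blast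
  then have "adj R 1 *v (adj R m *v v) \<in> vec.span ?G"
    by (rule adj_1_mult_in_span_adj_chain[OF assms(1)])
  moreover have "?rest \<in> vec.span ?G"
  proof (rule vec.span_sum)
    fix j assume "j \<in> {..D} - {Suc m}"
    then consider "j < Suc m" "j \<le> D" | "Suc m < j" by fastforce
    then show "p j *s (adj R j *v v) \<in> vec.span ?G"
    proof cases
      case 1
      then show ?thesis by (simp add: adj_chain_def vec.span_base vec.span_scale)
    qed (simp add: zero vec.span_zero)
  qed
  ultimately have "adj R 1 *v (adj R m *v v) - ?rest \<in> vec.span ?G"
    by (rule vec.span_diff)
  then have "p (Suc m) *s (adj R (Suc m) *v v) \<in> vec.span ?G"
    unfolding decomposition by simp
  then have "inverse (p (Suc m)) *s (p (Suc m) *s (adj R (Suc m) *v v)) \<in> vec.span ?G"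
    by (rule vec.span_scale)
  then have "adj R (Suc m) *v v \<in> vec.span ?G"
    using top by simp
  then show ?thesis
    using True by (simp add: adj_chain_Suc[of v "Suc m"] vec.span_redundant)
qed

lemma adj_mult_in_span_adj_chain:
  assumes "0 < D" "primitive_idempotents D R E" "k \<le> D"
  shows "adj R k *v v \<in> vec.span (adj_chain v (s_star D E v))"
proof -
  have "vec.span (adj_chain v m) \<subseteq> vec.span (adj_chain v (s_star D E v))" for m
  proof (rule vec.span_chain_stabilizes)
    show "vec.span (adj_chain v m) \<subseteq> vec.span (adj_chain v (Suc m))" for m
      by (rule vec.span_mono) (auto simp: adj_chain_def)
    show "vec.span (adj_chain v (Suc (Suc m))) = vec.span (adj_chain v (Suc m))"
      if "vec.span (adj_chain v (Suc m)) = vec.span (adj_chain v m)" for m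
      using span_adj_chain_persistent[OF assms(1) that] .
    have "vec.dim (adj_chain v 0) = 1"
      by (simp add: adj_chain_def vec_eq_iff)
    then show "vec.dim (adj_chain v m) \<le> vec.dim (adj_chain v 0) + s_star D E v" for m
      using dim_adj_chain_le[OF assms(2)] by simp
  qed
  moreover have "adj R k *v v \<in> vec.span (adj_chain v (Suc k))"
    using assms(3) by (auto simp: adj_chain_def intro: vec.span_base)
  ultimately show ?thesis by blast
qed

lemma dual_idem_mult_adj_mult:
  assumes "i \<le> D" "k \<le> D" "i + k < delta_x D R x v"
  shows "dual_idem R x i *v (adj R k *v v) = (if k = i then v $ x else 0) *s (adj R i *v hat x)"
proof -
  have "(adj R k *v v) $ y = (if k = i then v $ x else 0)" if "R i x y" for y
  proof -
    have vanish: "v $ z = 0" if "R k y z" "z \<noteq> x" for z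
    proof -
      obtain j where j: "j \<le> D" "R j x z" by (rule relation_exists)
      have "j \<noteq> 0" using j(2) \<open>z \<noteq> x\<close> diagonal by metis
      moreover have "j \<le> i + k" using triangle_inequality[OF \<open>R i x y\<close> \<open>R k y z\<close> j(2) assms(1,2) j(1)] .
      ultimately show ?thesis using vanishes_below_delta_x[of j D R x v z] j assms(3) by simp
    qed
    have "(adj R k *v v) $ y = (\<Sum>z | R k y z. if z = x then v $ x else 0)"
      unfolding adj_mult_vector_component by (rule sum.cong) (auto simp: vanish)
    also have "\<dots> = (if R k y x then v $ x else 0)"
      by simp
    moreover have "R k y x \<longleftrightarrow> k = i"
      using relation_unique relation_sym \<open>R i x y\<close> assms(1,2) by blast
    ultimately show ?thesis by simp
  qed
  then show ?thesis
    by (auto simp: vec_eq_iff dual_idem_mult_component adj_mult_hat dest: relation_sym[OF assms(1)])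
qed

lemma dual_idem_mult_span_adj_chain:
  assumes "i \<le> D" "i + m \<le> delta_x D R x v" "u \<in> vec.span (adj_chain v m)"
  shows "dual_idem R x i *v u \<in> vec.span {adj R i *v hat x}"
proof (rule matrix_vector_mult_in_span[OF _ assms(3)], rule image_subsetI)
  fix g assume "g \<in> adj_chain v m"
  then consider "g = 1" | k where "k < m" "k \<le> D" "g = adj R k *v v"
    by (auto simp: adj_chain_def)
  then show "dual_idem R x i *v g \<in> vec.span {adj R i *v hat x}"
  proof cases
    case 1
    then show ?thesis
      using assms(1) by (simp add: dual_idem_mult_ones vec.span_base)
  next
    case 2
    then show ?thesis
      using assms(1,2) by (simp add: dual_idem_mult_adj_mult vec.span_base vec.span_scale)
  qed
qed

end

theorem theorem3p2:
  fixes D :: nat and R :: "nat \<Rightarrow> 'a::finite \<Rightarrow> 'a \<Rightarrow> bool"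
    and E :: "nat \<Rightarrow> complex^'a^'a" and x :: 'a and cw :: "complex^'a" and l :: nat
  assumes "sym_assoc_scheme D R"
    and "metric_scheme D R"
    and "primitive_idempotents D R E"
    and "is_code R E cw"
    and "l \<le> D"
  shows "rel_codesign D R x (int (delta_x D R x cw) - int (s_star D E cw)) (adj R l *v cw)"
proof (cases "D = 0")
  case True
  then show ?thesis by (simp add: rel_codesign_def)
next
  case False
  interpret metric_sym_scheme D R
    using assms(1,2) by unfold_locales
  have in_chain: "adj R l *v cw \<in> vec.span (adj_chain cw (s_star D E cw))"
    using adj_mult_in_span_adj_chain False assms(3,5) by blast
  show ?thesis
    unfolding rel_codesign_def
  proof (intro allI impI)
    fix i assume "1 \<le> i \<and> int i \<le> int (delta_x D R x cw) - int (s_star D E cw) \<and> i \<le> D"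
    then have "dual_idem R x i *v (adj R l *v cw) \<in> vec.span {adj R i *v hat x}"
      using dual_idem_mult_span_adj_chain[OF _ _ in_chain] by simp
    then obtain c where "dual_idem R x i *v (adj R l *v cw) = c *s (adj R i *v hat x)"
      by (auto simp: vec.span_singleton)
    then show "lin_dep2 (dual_idem R x i *v (adj R l *v cw)) (adj R i *v hat x)"
      unfolding lin_dep2_def by (intro exI[of _ 1] exI[of _ "- c"]) simp
  qed
qed

end
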